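(* Let $\tau=t^{1/2}$ and $[2]_t=t^{1/2}+t^{-1/2}$. The infinite product $$\prod_{n\geq1}\frac{1}{(1+t^{-\frac12}qu^n)(1+t^{\frac12}q^{-1}u^n)(1+t^{\frac12}qu^n)(1+t^{-\frac12}q^{-1}u^n)(1-u^n)^{18}(1-tu^n)(1-t^{-1}u^n)}$$ can be written as $$\sum_{h=0}^\infty\sum_{g=0}^h n^h_g(t)\,\big(q^{-1}+[2]_t+q\big)^g u^h,$$ where each $n^h_g(t)\in\mathbb Q[\tau^{\pm1}]$ is a Laurent polynomial in $\tau$ invariant under $\tau\mapsto\tau^{-1}$.
   Context: The product is expanded as a formal power series in $u$ whose coefficients are Laurent polynomials in $q$ and $\tau=t^{1/2}$. *)

theory Defs
  imports "HOL-Library.Poly_Mapping" "HOL-Library.Product_Plus"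
          "HOL-Computational_Algebra.Formal_Power_Series"
begin

text \<open>Laurent polynomials over Q in the two variables q and tau = t^(1/2):
  a monomial q^a tau^b is encoded by the exponent pair (a,b).\<close>
type_synonym laurent2 = "(int \<times> int) \<Rightarrow>\<^sub>0 rat"

definition mono2 :: "int \<Rightarrow> int \<Rightarrow> laurent2" where
  "mono2 a b = Poly_Mapping.single (a, b) 1"

definition qv :: laurent2 where "qv = mono2 1 0"
definition qinv :: laurent2 where "qinv = mono2 (-1) 0"
definition tau :: laurent2 where "tau = mono2 0 1"
definition tauinv :: laurent2 where "tauinv = mono2 0 (-1)"

text \<open>Expansion of 1/(1 - c u^n) (n \<ge> 1) as a formal power series in u.\<close>
definition geom_inv :: "laurent2 \<Rightarrow> nat \<Rightarrow> laurent2 fps" where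
  "geom_inv c n = Abs_fps (\<lambda>k. if n dvd k then c ^ (k div n) else 0)"

definition prod_factor :: "nat \<Rightarrow> laurent2 fps" where
  "prod_factor n =
     geom_inv (- (tauinv * qv)) n * geom_inv (- (tau * qinv)) n *
     geom_inv (- (tau * qv)) n * geom_inv (- (tauinv * qinv)) n *
     geom_inv 1 n ^ 18 * geom_inv (tau ^ 2) n * geom_inv (tauinv ^ 2) n"

text \<open>The infinite product over n \<ge> 1: factors with n > h are 1 modulo u^(h+1),
  so the u^h coefficient is that of the finite product over 1..h.\<close>
definition infinite_product :: "laurent2 fps" where
  "infinite_product = Abs_fps (\<lambda>h. fps_nth (\<Prod>n\<in>{1..h}. prod_factor n) h)"

end

theory Submission
  imports Defs
begin

text \<open>The substitutions \<open>q \<mapsto> q\<^sup>-\<^sup>1\<close> and \<open>\<tau> \<mapsto> \<tau>\<^sup>-\<^sup>1\<close> act on exponents by additive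
  involutions, hence as ring automorphisms of \<open>\<rat>[q\<^sup>\<plusminus>\<^sup>1, \<tau>\<^sup>\<plusminus>\<^sup>1]\<close>; each permutes the factors
  of the product, so every coefficient of \<open>u\<^sup>h\<close> is invariant under both. Every factor only
  contributes \<open>q\<^sup>a u\<^sup>k\<close> with \<open>\<bar>a\<bar> \<le> k\<close>, so that coefficient has \<open>q\<close>-degree at most \<open>h\<close>.
  Finally, a \<open>q\<close>-symmetric Laurent polynomial of \<open>q\<close>-degree at most \<open>h\<close> is expanded in powers
  of \<open>W = q\<^sup>-\<^sup>1 + [2]\<^sub>t + q\<close> by peeling off \<open>c W\<^sup>H\<close>, where \<open>c\<close> is the coefficient of \<open>q\<^sup>H\<close>
  for the current degree \<open>H\<close>: since \<open>W\<^sup>H = q\<^sup>H + q\<^sup>-\<^sup>H + (lower q-degree)\<close>, this lowers the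
  degree, and \<open>c\<close> is \<open>\<tau>\<close>-symmetric because the polynomial is.\<close>

definition fps_map :: "('a \<Rightarrow> 'b) \<Rightarrow> 'a fps \<Rightarrow> 'b fps" where
  "fps_map f F = Abs_fps (\<lambda>n. f (fps_nth F n))"

lemma fps_map_nth [simp]: "fps_nth (fps_map f F) n = f (fps_nth F n)"
  by (simp add: fps_map_def)

locale semiring_hom =
  fixes f :: "'a::comm_semiring_1 \<Rightarrow> 'b::comm_semiring_1"
  assumes hom_zero: "f 0 = 0"
    and hom_one: "f 1 = 1"
    and hom_add: "f (x + y) = f x + f y"
    and hom_mult: "f (x * y) = f x * f y"
begin

lemma hom_sum: "f (sum g A) = (\<Sum>x\<in>A. f (g x))"
  using sum_comp_morphism[of f g A] by (simp add: hom_zero hom_add)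

lemma hom_power: "f (x ^ n) = f x ^ n"
  by (induction n) (simp_all add: hom_one hom_mult)

lemma fps_map_one: "fps_map f 1 = 1"
  by (rule fps_ext) (simp add: hom_zero hom_one)

lemma fps_map_mult: "fps_map f (F * G) = fps_map f F * fps_map f G"
  by (rule fps_ext) (simp add: fps_mult_nth hom_sum hom_mult)

lemma fps_map_power: "fps_map f (F ^ n) = fps_map f F ^ n"
  by (induction n) (simp_all add: fps_map_one fps_map_mult)

lemma fps_map_prod: "fps_map f (prod g A) = (\<Prod>x\<in>A. fps_map f (g x))"
  by (induction A rule: infinite_finite_induct) (simp_all add: fps_map_one fps_map_mult)

end

definition additive_involution :: "('a::plus \<Rightarrow> 'a) \<Rightarrow> bool" where
  "additive_involution \<phi> \<longleftrightarrow> (\<forall>x. \<phi> (\<phi> x) = x) \<and> (\<forall>x y. \<phi> (x + y) = \<phi> x + \<phi> y)"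

lemma additive_involution_inj: "additive_involution \<phi> \<Longrightarrow> inj \<phi>"
  unfolding additive_involution_def by (metis injI)

lemma additive_involution_bij: "additive_involution \<phi> \<Longrightarrow> bij \<phi>"
  unfolding additive_involution_def by (metis bijI injI surjI)

lemma additive_involution_zero:
  fixes \<phi> :: "'a::monoid_add \<Rightarrow> 'a"
  assumes "additive_involution \<phi>"
  shows "\<phi> 0 = 0"
proof -
  from assms have "\<phi> (0 + \<phi> 0) = \<phi> 0 + \<phi> (\<phi> 0)" and "\<phi> (\<phi> 0) = 0"
    unfolding additive_involution_def by blast+
  then show ?thesis by simp
qed

lemma lookup_map_key_involution:
  assumes "additive_involution \<phi>"
  shows "Poly_Mapping.lookup (Poly_Mapping.map_key \<phi> p) k = Poly_Mapping.lookup p (\<phi> k)"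
  by (simp add: map_key.rep_eq[OF additive_involution_inj[OF assms]])

context
  fixes \<phi> :: "'a::monoid_add \<Rightarrow> 'a"
  assumes \<phi>: "additive_involution \<phi>"
begin

lemma map_key_involution_single:
  "Poly_Mapping.map_key \<phi> (Poly_Mapping.single k v) = Poly_Mapping.single (\<phi> k) v"
  using \<phi> unfolding additive_involution_def
  by (metis additive_involution_inj[OF \<phi>] map_key_single)

lemma map_key_involution_one:
  "Poly_Mapping.map_key \<phi> (1 :: 'a \<Rightarrow>\<^sub>0 'b::semiring_1) = 1"
proof -
  have "Poly_Mapping.map_key \<phi> (Poly_Mapping.single 0 (1::'b)) = Poly_Mapping.single (\<phi> 0) 1"
    by (rule map_key_involution_single)
  then show ?thesis by (simp add: additive_involution_zero[OF \<phi>])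
qed

lemma map_key_involution_uminus:
  "Poly_Mapping.map_key \<phi> (- p :: 'a \<Rightarrow>\<^sub>0 'b::ab_group_add) = - Poly_Mapping.map_key \<phi> p"
  by (rule poly_mapping_eqI) (simp add: lookup_map_key_involution[OF \<phi>])

lemma map_key_involution_diff:
  "Poly_Mapping.map_key \<phi> (p - q :: 'a \<Rightarrow>\<^sub>0 'b::ab_group_add) =
     Poly_Mapping.map_key \<phi> p - Poly_Mapping.map_key \<phi> q"
  by (rule poly_mapping_eqI) (simp add: lookup_map_key_involution[OF \<phi>] lookup_minus)

lemma map_key_involution_mult:
  "Poly_Mapping.map_key \<phi> (p * q :: 'a \<Rightarrow>\<^sub>0 'b::semiring_0) =
     Poly_Mapping.map_key \<phi> p * Poly_Mapping.map_key \<phi> q"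
proof (rule poly_mapping_eqI)
  fix k
  have bij: "bij \<phi>" using additive_involution_bij[OF \<phi>] .
  have shift: "(k = l + m) \<longleftrightarrow> (\<phi> k = \<phi> l + \<phi> m)" for l m
    using \<phi> unfolding additive_involution_def by metis
  have inner: "(\<Sum>m. Poly_Mapping.lookup q (\<phi> m) when k = l + m) =
      (\<Sum>m. Poly_Mapping.lookup q m when \<phi> k = \<phi> l + m)" for l
    by (rule Sum_any.reindex_cong[OF bij, symmetric]) (auto simp: fun_eq_iff shift)
  have "Poly_Mapping.lookup (Poly_Mapping.map_key \<phi> p * Poly_Mapping.map_key \<phi> q) k =
      (\<Sum>l. Poly_Mapping.lookup p (\<phi> l) * (\<Sum>m. Poly_Mapping.lookup q m when \<phi> k = \<phi> l + m))"
    by (simp add: lookup_mult lookup_map_key_involution[OF \<phi>] inner)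
  also have "\<dots> = (\<Sum>l. Poly_Mapping.lookup p l * (\<Sum>m. Poly_Mapping.lookup q m when \<phi> k = l + m))"
    using \<phi> unfolding additive_involution_def
    by (intro Sum_any.reindex_cong[OF bij]) (auto simp: fun_eq_iff)
  also have "\<dots> = Poly_Mapping.lookup (Poly_Mapping.map_key \<phi> (p * q)) k"
    by (simp add: lookup_mult lookup_map_key_involution[OF \<phi>])
  finally show "Poly_Mapping.lookup (Poly_Mapping.map_key \<phi> (p * q)) k =
      Poly_Mapping.lookup (Poly_Mapping.map_key \<phi> p * Poly_Mapping.map_key \<phi> q) k" ..
qed

lemma map_key_involution_power:
  "Poly_Mapping.map_key \<phi> (p ^ n :: 'a \<Rightarrow>\<^sub>0 'b::semiring_1) = Poly_Mapping.map_key \<phi> p ^ n"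
  by (induction n) (simp_all add: map_key_involution_one map_key_involution_mult)

end

lemma semiring_hom_map_key_involution:
  fixes \<phi> :: "'a::comm_monoid_add \<Rightarrow> 'a"
  assumes \<phi>: "additive_involution \<phi>"
  shows "semiring_hom (Poly_Mapping.map_key \<phi> :: ('a \<Rightarrow>\<^sub>0 'b::comm_semiring_1) \<Rightarrow> _)"
  by unfold_locales
    (simp_all add: map_key_plus additive_involution_inj[OF \<phi>]
      map_key_involution_one[OF \<phi>] map_key_involution_mult[OF \<phi>])

lemma lookup_mult_single:
  fixes f :: "'a::group_add \<Rightarrow>\<^sub>0 'b::semiring_0"
  shows "Poly_Mapping.lookup (f * Poly_Mapping.single k v) x = Poly_Mapping.lookup f (x - k) * v"
proof -
  have inner: "(\<Sum>m. Poly_Mapping.lookup (Poly_Mapping.single k v) m when x = l + m) = (v when x = l + k)" for l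
  proof -
    have "(\<Sum>m. Poly_Mapping.lookup (Poly_Mapping.single k v) m when x = l + m) =
        (\<Sum>m. (v when x = l + m) when k = m)"
      by (simp add: lookup_single when_commute)
    then show ?thesis by simp
  qed
  have "Poly_Mapping.lookup (f * Poly_Mapping.single k v) x =
      (\<Sum>l. Poly_Mapping.lookup f l * (v when x = l + k))"
    by (simp add: lookup_mult inner)
  also have "\<dots> = (\<Sum>l. Poly_Mapping.lookup f l * v when l = x - k)"
    by (rule Sum_any.cong) (auto simp: when_def algebra_simps)
  finally show ?thesis by simp
qed

definition q_bounded :: "nat \<Rightarrow> ((int \<times> 'a) \<Rightarrow>\<^sub>0 'b::zero) \<Rightarrow> bool" where
  "q_bounded d p \<longleftrightarrow> (\<forall>x \<in> Poly_Mapping.keys p. \<bar>fst x\<bar> \<le> int d)"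

lemma q_bounded_iff_lookup:
  "q_bounded d p \<longleftrightarrow> (\<forall>a b. int d < \<bar>a\<bar> \<longrightarrow> Poly_Mapping.lookup p (a, b) = 0)"
  unfolding q_bounded_def by (force simp: in_keys_iff)

lemma q_bounded_mono: "q_bounded d p \<Longrightarrow> d \<le> e \<Longrightarrow> q_bounded e p"
  unfolding q_bounded_def by force

lemma q_bounded_zero: "q_bounded d 0"
  unfolding q_bounded_def by simp

lemma q_bounded_add: "q_bounded d p \<Longrightarrow> q_bounded d r \<Longrightarrow> q_bounded d (p + r)"
  unfolding q_bounded_iff_lookup by (simp add: lookup_add)

lemma q_bounded_uminus: "q_bounded d p \<Longrightarrow> q_bounded d (- p)"
  unfolding q_bounded_iff_lookup by simp

lemma q_bounded_sum: "(\<And>x. x \<in> A \<Longrightarrow> q_bounded d (f x)) \<Longrightarrow> q_bounded d (sum f A)"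
  by (induction A rule: infinite_finite_induct) (simp_all add: q_bounded_zero q_bounded_add)

lemma q_bounded_single: "\<bar>a\<bar> \<le> int d \<Longrightarrow> q_bounded d (Poly_Mapping.single (a, b) v)"
  unfolding q_bounded_def by simp

lemma q_bounded_mult:
  fixes p r :: "(int \<times> 'a::monoid_add) \<Rightarrow>\<^sub>0 'b::semiring_0"
  assumes "q_bounded d p" and "q_bounded e r"
  shows "q_bounded (d + e) (p * r)"
  unfolding q_bounded_def
proof
  fix x assume "x \<in> Poly_Mapping.keys (p * r)"
  then obtain y z where "x = y + z" "y \<in> Poly_Mapping.keys p" "z \<in> Poly_Mapping.keys r"
    using keys_mult by blast
  then show "\<bar>fst x\<bar> \<le> int (d + e)"
    using assms unfolding q_bounded_def by fastforce
qed

lemma q_bounded_one: "q_bounded 0 (1 :: (int \<times> 'a::zero) \<Rightarrow>\<^sub>0 'b::zero_neq_one)"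
  unfolding q_bounded_iff_lookup by (simp add: lookup_one when_def zero_prod_def)

lemma q_bounded_power:
  fixes p :: "(int \<times> 'a::monoid_add) \<Rightarrow>\<^sub>0 'b::semiring_1"
  shows "q_bounded d p \<Longrightarrow> q_bounded (n * d) (p ^ n)"
  by (induction n) (simp_all add: q_bounded_one q_bounded_mult)

definition fps_q_bounded :: "((int \<times> 'a) \<Rightarrow>\<^sub>0 'b::zero) fps \<Rightarrow> bool" where
  "fps_q_bounded F \<longleftrightarrow> (\<forall>n. q_bounded n (fps_nth F n))"

lemma fps_q_bounded_one: "fps_q_bounded (1 :: ((int \<times> 'a::zero) \<Rightarrow>\<^sub>0 'b::zero_neq_one) fps)"
  unfolding fps_q_bounded_def by (simp add: q_bounded_one q_bounded_zero)

lemma fps_q_bounded_mult: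
  fixes F G :: "((int \<times> 'a::monoid_add) \<Rightarrow>\<^sub>0 'b::semiring_0) fps"
  assumes "fps_q_bounded F" and "fps_q_bounded G"
  shows "fps_q_bounded (F * G)"
  unfolding fps_q_bounded_def fps_mult_nth
proof (intro allI q_bounded_sum)
  fix n i :: nat assume "i \<in> {0..n}"
  then have "q_bounded (i + (n - i)) (fps_nth F i * fps_nth G (n - i))"
    using assms unfolding fps_q_bounded_def by (intro q_bounded_mult) auto
  with \<open>i \<in> {0..n}\<close> show "q_bounded n (fps_nth F i * fps_nth G (n - i))" by simp
qed

lemma fps_q_bounded_power:
  fixes F :: "((int \<times> 'a::monoid_add) \<Rightarrow>\<^sub>0 'b::semiring_1) fps"
  shows "fps_q_bounded F \<Longrightarrow> fps_q_bounded (F ^ n)"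
  by (induction n) (simp_all add: fps_q_bounded_one fps_q_bounded_mult)

lemma fps_q_bounded_prod:
  fixes F :: "'i \<Rightarrow> ((int \<times> 'a::comm_monoid_add) \<Rightarrow>\<^sub>0 'b::comm_semiring_1) fps"
  shows "(\<And>i. i \<in> A \<Longrightarrow> fps_q_bounded (F i)) \<Longrightarrow> fps_q_bounded (prod F A)"
  by (induction A rule: infinite_finite_induct) (simp_all add: fps_q_bounded_one fps_q_bounded_mult)

lemma mono2_mult: "mono2 a b * mono2 c d = mono2 (a + c) (b + d)"
  by (simp add: mono2_def mult_single)

lemma mono2_power: "mono2 a b ^ n = mono2 (int n * a) (int n * b)"
  by (induction n) (simp_all add: mono2_mult algebra_simps, simp add: mono2_def flip: zero_prod_def)

lemma q_bounded_mono2: "\<bar>a\<bar> \<le> int d \<Longrightarrow> q_bounded d (mono2 a b)"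
  unfolding mono2_def by (rule q_bounded_single)

lemma fps_q_bounded_geom_inv:
  assumes "q_bounded 1 c" and "n \<ge> 1"
  shows "fps_q_bounded (geom_inv c n)"
  unfolding fps_q_bounded_def
proof
  fix k
  have "q_bounded (k div n) (c ^ (k div n))" using q_bounded_power[OF assms(1)] by simp
  moreover have "k div n \<le> k" by (rule div_le_dividend)
  ultimately show "q_bounded k (fps_nth (geom_inv c n) k)"
    unfolding geom_inv_def by (auto intro: q_bounded_mono simp: q_bounded_zero)
qed

lemma fps_q_bounded_prod_factor: "n \<ge> 1 \<Longrightarrow> fps_q_bounded (prod_factor n)"
  unfolding prod_factor_def qv_def qinv_def tau_def tauinv_def
  by (intro fps_q_bounded_mult fps_q_bounded_power fps_q_bounded_geom_inv)
    (simp_all add: mono2_mult mono2_power q_bounded_uminus q_bounded_mono2 q_bounded_one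
      q_bounded_mono[OF q_bounded_one])

lemma q_bounded_infinite_product_nth: "q_bounded h (fps_nth infinite_product h)"
proof -
  have "fps_q_bounded (\<Prod>n\<in>{1..h}. prod_factor n)"
    by (rule fps_q_bounded_prod) (simp add: fps_q_bounded_prod_factor)
  then show ?thesis unfolding infinite_product_def fps_q_bounded_def by simp
qed

definition q_flip :: "int \<times> int \<Rightarrow> int \<times> int" where "q_flip x = (- fst x, snd x)"
definition tau_flip :: "int \<times> int \<Rightarrow> int \<times> int" where "tau_flip x = (fst x, - snd x)"

lemma additive_involution_q_flip: "additive_involution q_flip"
  unfolding additive_involution_def q_flip_def by simp

lemma additive_involution_tau_flip: "additive_involution tau_flip"
  unfolding additive_involution_def tau_flip_def by simp

lemma fps_map_geom_inv: "semiring_hom f \<Longrightarrow> fps_map f (geom_inv c n) = geom_inv (f c) n"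
  by (rule fps_ext) (simp add: geom_inv_def semiring_hom.hom_power semiring_hom.hom_zero)

text \<open>\<open>q \<mapsto> q\<^sup>-\<^sup>1\<close> and \<open>\<tau> \<mapsto> \<tau>\<^sup>-\<^sup>1\<close> each permute the first four factors and fix the rest.\<close>
lemma prod_factor_flip_invariant:
  assumes "\<phi> \<in> {q_flip, tau_flip}"
  shows "fps_map (Poly_Mapping.map_key \<phi>) (prod_factor n) = prod_factor n"
proof -
  have \<phi>: "additive_involution \<phi>"
    using assms additive_involution_q_flip additive_involution_tau_flip by blast
  note hom = semiring_hom_map_key_involution[OF \<phi>]
  have flip_mono2: "Poly_Mapping.map_key \<phi> (mono2 a b) = mono2 (fst (\<phi> (a, b))) (snd (\<phi> (a, b)))" for a b
    unfolding mono2_def by (simp add: map_key_involution_single[OF \<phi>])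
  show ?thesis
    using assms unfolding prod_factor_def qv_def qinv_def tau_def tauinv_def
    by (auto simp: semiring_hom.fps_map_mult[OF hom] semiring_hom.fps_map_power[OF hom]
        fps_map_geom_inv[OF hom] map_key_involution_uminus[OF \<phi>] semiring_hom.hom_one[OF hom]
        mono2_mult mono2_power flip_mono2 q_flip_def tau_flip_def ac_simps)
qed

lemma infinite_product_nth_flip_invariant:
  assumes "\<phi> \<in> {q_flip, tau_flip}"
  shows "Poly_Mapping.map_key \<phi> (fps_nth infinite_product h) = fps_nth infinite_product h"
proof -
  have "semiring_hom (Poly_Mapping.map_key \<phi> :: laurent2 \<Rightarrow> laurent2)"
    using assms additive_involution_q_flip additive_involution_tau_flip
      semiring_hom_map_key_involution by blast
  then have "fps_map (Poly_Mapping.map_key \<phi>) (\<Prod>n\<in>{1..h}. prod_factor n) = (\<Prod>n\<in>{1..h}. prod_factor n)"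
    by (simp add: semiring_hom.fps_map_prod prod_factor_flip_invariant[OF assms])
  then show ?thesis
    unfolding infinite_product_def by (metis fps_map_nth fps_nth_Abs_fps)
qed

definition W :: laurent2 where "W = qinv + (tau + tauinv) + qv"

lemma q_bounded_W: "q_bounded 1 W"
  unfolding W_def qinv_def tau_def tauinv_def qv_def
  by (intro q_bounded_add q_bounded_mono2) simp_all

lemma W_flip_invariant: "\<phi> \<in> {q_flip, tau_flip} \<Longrightarrow> Poly_Mapping.map_key \<phi> W = W"
  by (auto simp: W_def qv_def qinv_def tau_def tauinv_def mono2_def q_flip_def tau_flip_def
      map_key_plus additive_involution_inj map_key_involution_single
      additive_involution_q_flip additive_involution_tau_flip ac_simps)

lemma W_power_leading_terms:
  "\<exists>r. q_bounded m r \<and> W ^ Suc m = mono2 (int (Suc m)) 0 + mono2 (- int (Suc m)) 0 + r"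
proof (induction m)
  case 0
  have "q_bounded 0 (tau + tauinv)"
    unfolding tau_def tauinv_def by (intro q_bounded_add q_bounded_mono2) simp_all
  moreover have "W ^ Suc 0 = mono2 (int (Suc 0)) 0 + mono2 (- int (Suc 0)) 0 + (tau + tauinv)"
    by (simp add: W_def qv_def qinv_def algebra_simps)
  ultimately show ?case by blast
next
  case (Suc m)
  let ?H = "int (Suc m)"
  from Suc obtain r where r: "q_bounded m r" "W ^ Suc m = mono2 ?H 0 + mono2 (- ?H) 0 + r"
    by blast
  define r' where "r' = (qinv + (tau + tauinv)) * mono2 ?H 0 + (tau + tauinv + qv) * mono2 (- ?H) 0 + W * r"
  have "W ^ Suc (Suc m) = qv * mono2 ?H 0 + qinv * mono2 (- ?H) 0 + r'"
    unfolding r'_def power_Suc[of W "Suc m"] r(2) by (simp add: W_def algebra_simps)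
  also have "\<dots> = mono2 (int (Suc (Suc m))) 0 + mono2 (- int (Suc (Suc m))) 0 + r'"
    by (simp add: qv_def qinv_def mono2_mult)
  finally have leading: "W ^ Suc (Suc m) = mono2 (int (Suc (Suc m))) 0 + mono2 (- int (Suc (Suc m))) 0 + r'" .
  have "q_bounded (Suc m) ((qinv + (tau + tauinv)) * mono2 ?H 0)"
    and "q_bounded (Suc m) ((tau + tauinv + qv) * mono2 (- ?H) 0)"
    unfolding qv_def qinv_def tau_def tauinv_def
    by (simp_all add: distrib_right mono2_mult) (intro q_bounded_add q_bounded_mono2; simp)+
  with q_bounded_mult[OF q_bounded_W r(1)] have "q_bounded (Suc m) r'"
    unfolding r'_def by (simp add: q_bounded_add)
  with leading show ?case by blast
qed

definition q_coeff :: "int \<Rightarrow> laurent2 \<Rightarrow> laurent2" where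
  "q_coeff a p = Abs_poly_mapping (\<lambda>x. if fst x = 0 then Poly_Mapping.lookup p (a, snd x) else 0)"

lemma lookup_q_coeff:
  "Poly_Mapping.lookup (q_coeff a p) x = (if fst x = 0 then Poly_Mapping.lookup p (a, snd x) else 0)"
proof -
  have "{x. (if fst x = 0 then Poly_Mapping.lookup p (a, snd x) else 0) \<noteq> 0} \<subseteq>
      (\<lambda>y. (0, snd y)) ` Poly_Mapping.keys p"
  proof
    fix x assume "x \<in> {x. (if fst x = 0 then Poly_Mapping.lookup p (a, snd x) else 0) \<noteq> 0}"
    then have "fst x = 0" and "(a, snd x) \<in> Poly_Mapping.keys p"
      by (auto simp: in_keys_iff split: if_splits)
    then show "x \<in> (\<lambda>y. (0, snd y)) ` Poly_Mapping.keys p"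
      by (intro image_eqI[of _ _ "(a, snd x)"]) (auto simp: prod_eq_iff)
  qed
  then have "finite {x. (if fst x = 0 then Poly_Mapping.lookup p (a, snd x) else 0) \<noteq> 0}"
    by (rule finite_subset) simp
  then have "Poly_Mapping.lookup (q_coeff a p) =
      (\<lambda>x. if fst x = 0 then Poly_Mapping.lookup p (a, snd x) else 0)"
    unfolding q_coeff_def by (rule lookup_Abs_poly_mapping)
  then show ?thesis by simp
qed

lemma q_bounded_q_coeff: "q_bounded 0 (q_coeff a p)"
  unfolding q_bounded_iff_lookup by (simp add: lookup_q_coeff)

lemma map_key_q_flip_q_coeff: "Poly_Mapping.map_key q_flip (q_coeff a p) = q_coeff a p"
  by (rule poly_mapping_eqI)
    (simp add: lookup_map_key_involution[OF additive_involution_q_flip] lookup_q_coeff q_flip_def)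

lemma map_key_tau_flip_q_coeff:
  "Poly_Mapping.map_key tau_flip (q_coeff a p) = q_coeff a (Poly_Mapping.map_key tau_flip p)"
  by (rule poly_mapping_eqI)
    (simp add: lookup_map_key_involution[OF additive_involution_tau_flip] lookup_q_coeff tau_flip_def)

definition q_free_tau_symmetric :: "laurent2 \<Rightarrow> bool" where
  "q_free_tau_symmetric c \<longleftrightarrow> Poly_Mapping.keys c \<subseteq> {0} \<times> UNIV \<and>
     (\<forall>k. Poly_Mapping.lookup c (0, k) = Poly_Mapping.lookup c (0, - k))"

lemma q_free_tau_symmetricI:
  assumes "q_bounded 0 c" and "Poly_Mapping.map_key tau_flip c = c"
  shows "q_free_tau_symmetric c"
  unfolding q_free_tau_symmetric_def
proof
  show "Poly_Mapping.keys c \<subseteq> {0} \<times> UNIV"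
    using assms(1) unfolding q_bounded_def by force
  have "Poly_Mapping.lookup c (0, k) = Poly_Mapping.lookup c (0, - k)" for k
    using lookup_map_key_involution[OF additive_involution_tau_flip, of c "(0, k)"] assms(2)
    by (simp add: tau_flip_def)
  then show "\<forall>k. Poly_Mapping.lookup c (0, k) = Poly_Mapping.lookup c (0, - k)" ..
qed

text \<open>Subtracting the leading term \<open>c\<^sub>H (q\<^sup>H + q\<^sup>-\<^sup>H + \<dots>)\<close> of \<open>c\<^sub>H W\<^sup>H\<close> removes both
  \<open>q\<^sup>H\<close> and \<open>q\<^sup>-\<^sup>H\<close>, because the coefficients of \<open>q\<^sup>H\<close> and \<open>q\<^sup>-\<^sup>H\<close> in a \<open>q\<close>-symmetric \<open>p\<close> agree.\<close>
lemma q_bounded_sub_leading_W_power: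
  assumes "q_bounded (Suc h) p" and sym: "Poly_Mapping.map_key q_flip p = p"
  shows "q_bounded h (p - q_coeff (int (Suc h)) p * W ^ Suc h)"
proof -
  let ?H = "int (Suc h)" and ?C = "q_coeff (int (Suc h)) p"
  obtain r where r: "q_bounded h r" "W ^ Suc h = mono2 ?H 0 + mono2 (- ?H) 0 + r"
    using W_power_leading_terms by blast
  have Cr: "q_bounded h (?C * r)"
    using q_bounded_mult[OF q_bounded_q_coeff r(1)] by simp
  have p_sym: "Poly_Mapping.lookup p (- a, b) = Poly_Mapping.lookup p (a, b)" for a b
    using lookup_map_key_involution[OF additive_involution_q_flip, of p "(a, b)"] sym
    by (simp add: q_flip_def)
  have lookup_diff: "Poly_Mapping.lookup (p - ?C * W ^ Suc h) (a, b) =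
      Poly_Mapping.lookup p (a, b)
      - (if a = ?H then Poly_Mapping.lookup p (?H, b) else 0)
      - (if a = - ?H then Poly_Mapping.lookup p (?H, b) else 0)
      - Poly_Mapping.lookup (?C * r) (a, b)" for a b
    unfolding r(2) mono2_def
    by (simp add: algebra_simps lookup_add lookup_minus lookup_mult_single lookup_q_coeff)
  show ?thesis
    unfolding q_bounded_iff_lookup
  proof (intro allI impI)
    fix a b assume a: "int h < \<bar>a\<bar>"
    have "Poly_Mapping.lookup (?C * r) (a, b) = 0"
      using Cr a unfolding q_bounded_iff_lookup by blast
    moreover have "\<bar>a\<bar> > ?H \<Longrightarrow> Poly_Mapping.lookup p (a, b) = 0"
      using assms(1) unfolding q_bounded_iff_lookup by blast
    moreover have "a = ?H \<or> a = - ?H \<or> \<bar>a\<bar> > ?H" using a by linarith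
    ultimately show "Poly_Mapping.lookup (p - ?C * W ^ Suc h) (a, b) = 0"
      unfolding lookup_diff using p_sym[of ?H b] by auto
  qed
qed

lemma q_symmetric_W_expansion:
  assumes "q_bounded h p"
    and "Poly_Mapping.map_key q_flip p = p" and "Poly_Mapping.map_key tau_flip p = p"
  shows "\<exists>c. (\<forall>g. q_free_tau_symmetric (c g)) \<and> p = (\<Sum>g\<le>h. c g * W ^ g)"
  using assms
proof (induction h arbitrary: p)
  case 0
  then have "q_free_tau_symmetric p" by (intro q_free_tau_symmetricI)
  then show ?case by (intro exI[of _ "\<lambda>_. p"]) simp
next
  case (Suc h)
  define C where "C = q_coeff (int (Suc h)) p"
  define p' where "p' = p - C * W ^ Suc h"
  have C_inv: "Poly_Mapping.map_key q_flip C = C" "Poly_Mapping.map_key tau_flip C = C"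
    using Suc.prems(3) by (simp_all add: C_def map_key_q_flip_q_coeff map_key_tau_flip_q_coeff)
  have "q_bounded h p'"
    unfolding p'_def C_def using Suc.prems(1,2) by (rule q_bounded_sub_leading_W_power)
  moreover have "Poly_Mapping.map_key q_flip p' = p'" "Poly_Mapping.map_key tau_flip p' = p'"
    unfolding p'_def using Suc.prems(2,3) C_inv
    by (simp_all add: additive_involution_q_flip additive_involution_tau_flip W_flip_invariant
        map_key_involution_diff map_key_involution_mult map_key_involution_power)
  ultimately obtain c where c: "\<forall>g. q_free_tau_symmetric (c g)" "p' = (\<Sum>g\<le>h. c g * W ^ g)"
    using Suc.IH by blast
  have "q_free_tau_symmetric C"
    using q_bounded_q_coeff C_inv(2) unfolding C_def by (rule q_free_tau_symmetricI)
  with c have "\<forall>g. q_free_tau_symmetric ((c(Suc h := C)) g)" by simp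
  moreover have "p = (\<Sum>g\<le>Suc h. (c(Suc h := C)) g * W ^ g)"
    using c(2) by (simp add: p'_def diff_eq_eq)
  ultimately show ?case by blast
qed

theorem mainTheorem7:
  shows "\<exists>N :: nat \<Rightarrow> nat \<Rightarrow> laurent2.
    (\<forall>h g. Poly_Mapping.keys (N h g) \<subseteq> {0} \<times> UNIV \<and>
           (\<forall>k::int. Poly_Mapping.lookup (N h g) (0, k) = Poly_Mapping.lookup (N h g) (0, - k))) \<and>
    (\<forall>h. fps_nth infinite_product h =
          (\<Sum>g\<le>h. N h g * (qinv + (tau + tauinv) + qv) ^ g))"
proof -
  have "\<exists>c. (\<forall>g. q_free_tau_symmetric (c g)) \<and>
      fps_nth infinite_product h = (\<Sum>g\<le>h. c g * W ^ g)" for h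
    by (rule q_symmetric_W_expansion)
      (simp_all add: q_bounded_infinite_product_nth infinite_product_nth_flip_invariant)
  then obtain N where "\<And>h. (\<forall>g. q_free_tau_symmetric (N h g)) \<and>
      fps_nth infinite_product h = (\<Sum>g\<le>h. N h g * W ^ g)"
    by metis
  then show ?thesis
    unfolding q_free_tau_symmetric_def W_def by blast
qed

end
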